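(* For every $t\in\mathbb Z$, the process $(\overline{\bm Z}^{(t)}_s)_{s\ge t}$ has the distribution of a random walk started at $0$ whose step distribution is that of the increments of $\overline{\bm Y}$ (which is the same as that of $-\overline{\bm X}$).
   Context: Let $\nu=\frac12\delta_{(1,-1)}+\sum_{i,j\ge0}2^{-i-j-3}\delta_{(-i,j)}$ on $\mathbb Z^2$ and $\overline{\bm W}=(\overline{\bm X},\overline{\bm Y})=(\overline{\bm W}_t)_{t\in\mathbb Z}$ a two-sided random walk with i.i.d. steps of law $\nu$ and $\overline{\bm W}_0=(0,0)$. Its coalescent-walk process $\overline{\bm Z}=\{\overline{\bm Z}^{(t)}\}_{t\in\mathbb Z}$ is defined by $\overline{\bm Z}^{(t)}_t=0$ and, for $\ell\ge t$: if $\overline{\bm W}_{\ell+1}-\overline{\bm W}_\ell=(1,-1)$ then $\overline{\bm Z}^{(t)}_{\ell+1}-\overline{\bm Z}^{(t)}_\ell=-1$; if $\overline{\bm W}_{\ell+1}-\overline{\bm W}_\ell=(-i,j)$ with $i,j\ge0$, the increment is $j$ if $\overline{\bm Z}^{(t)}_\ell\ge0$, $i$ if $\overline{\bm Z}^{(t)}_\ell<-i$, and $j-\overline{\bm Z}^{(t)}_\ell$ if $-i\le\overline{\bm Z}^{(t)}_\ell<0$. *)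

theory Defs
  imports "HOL-Probability.Probability"
begin

definition nu_mass :: "int \<times> int \<Rightarrow> real" where
  "nu_mass w = (if w = (1, -1) then 1/2
     else if fst w \<le> 0 \<and> snd w \<ge> 0
       then (1/2) ^ (nat (- fst w) + nat (snd w) + 3) else 0)"

definition nu :: "(int \<times> int) pmf" where
  "nu = embed_pmf nu_mass"

text \<open>Increment of a coalescent walk at position z when the step of the
  driving walk is w = W_(l+1) - W_l.  For w = (-i, j) with i,j >= 0:
  j if z >= 0;  i if z < -i;  j - z if -i <= z < 0.\<close>
definition cw_inc :: "int \<times> int \<Rightarrow> int \<Rightarrow> int" where
  "cw_inc w z = (if w = (1, -1) then -1
     else if z \<ge> 0 then snd w
     else if z < fst w then - fst w
     else snd w - z)"

text \<open>Coalescent walk started at time t, driven by the step sequence xi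
  (xi l = W_(l+1) - W_l).  cwp xi t n is the value Z^(t)_(t+n).\<close>
fun cwp :: "(int \<Rightarrow> int \<times> int) \<Rightarrow> int \<Rightarrow> nat \<Rightarrow> int" where
  "cwp xi t 0 = 0"
| "cwp xi t (Suc n) = cwp xi t n + cw_inc (xi (t + int n)) (cwp xi t n)"

end

theory Submission
  imports Defs
begin

text \<open>Under \<open>\<nu>\<close> a step is \<open>(1, -1)\<close> with probability 1/2 and otherwise \<open>(-I, J)\<close> with \<open>I\<close>, \<open>J\<close>
  independent geometric variables on \<open>\<nat>\<close> of parameter 1/2. From position \<open>z\<close> the coalescent
  walk then moves by \<open>-1\<close> in the first case; in the second by \<open>J\<close> if \<open>z \<ge> 0\<close>, and for \<open>z < 0\<close>
  by \<open>I\<close> if \<open>I < -z\<close> and by \<open>J - z\<close> otherwise, which by memorylessness of the geometric law is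
  again distributed like \<open>J\<close>. So whatever the current position, the next increment has the law
  of a \<open>Y\<close>-increment, independently of the past: the increments are i.i.d. and the coalescent
  walk is a random walk. Swapping \<open>I\<close> and \<open>J\<close> shows that \<open>Y\<close>- and \<open>-X\<close>-increments have the
  same law.\<close>

lemma geometric_pmf_atLeast:
  assumes "0 < p" "p \<le> 1"
  shows "measure_pmf.prob (geometric_pmf p) {m..} = (1 - p) ^ m"
proof -
  have "measure_pmf.prob (geometric_pmf p) {..<m} = (\<Sum>k<m. (1 - p) ^ k) * p"
    using assms by (simp add: measure_measure_pmf_finite sum_distrib_right)
  also have "\<dots> = 1 - (1 - p) ^ m"
    using assms by (simp add: sum_gp_strict)
  finally have "measure_pmf.prob (geometric_pmf p) {..<m} = 1 - (1 - p) ^ m" .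
  moreover have "{m..} = UNIV - {..<m}" by auto
  ultimately show ?thesis
    using measure_pmf.prob_compl[of "{..<m}" "geometric_pmf p"] by simp
qed

lemma geometric_pmf_memoryless:
  assumes "0 < p" "p \<le> 1"
  shows "map_pmf (\<lambda>(i, j). if i < m then i else m + j) (pair_pmf (geometric_pmf p) (geometric_pmf p))
       = geometric_pmf p"
proof (rule pmf_eqI)
  fix a :: nat
  let ?f = "\<lambda>(i, j). if i < m then i else m + j"
  show "pmf (map_pmf ?f (pair_pmf (geometric_pmf p) (geometric_pmf p))) a = pmf (geometric_pmf p) a"
  proof (cases "a < m")
    case True
    then have "?f -` {a} = {a} \<times> UNIV" by auto
    then show ?thesis by (simp add: pmf_map measure_pmf_prob_product measure_pmf_single)
  next
    case False
    then have "?f -` {a} = {m..} \<times> {a - m}" by (auto split: if_splits)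
    then show ?thesis
      using False assms
      by (simp add: pmf_map measure_pmf_prob_product measure_pmf_single geometric_pmf_atLeast
          del: pmf_geometric) (simp add: power_add[symmetric])
  qed
qed

fun walk :: "('w \<Rightarrow> 'b::comm_monoid_add \<Rightarrow> 'b) \<Rightarrow> (nat \<Rightarrow> 'w) \<Rightarrow> nat \<Rightarrow> 'b" where
  "walk inc f 0 = 0"
| "walk inc f (Suc n) = walk inc f n + inc (f n) (walk inc f n)"

definition walk_incr :: "('w \<Rightarrow> 'b::comm_monoid_add \<Rightarrow> 'b) \<Rightarrow> (nat \<Rightarrow> 'w) \<Rightarrow> nat \<Rightarrow> 'b" where
  "walk_incr inc f n = inc (f n) (walk inc f n)"

lemma walk_eq_sum_walk_incr: "walk inc f n = (\<Sum>k<n. walk_incr inc f k)"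
  by (induction n) (simp_all add: walk_incr_def)

lemma walk_cong: "(\<And>k. k < n \<Longrightarrow> f k = g k) \<Longrightarrow> walk inc f n = walk inc g n"
  by (induction n) auto

lemma walk_incr_cong: "(\<And>k. k \<le> n \<Longrightarrow> f k = g k) \<Longrightarrow> walk_incr inc f n = walk_incr inc g n"
  unfolding walk_incr_def by (metis le_refl less_imp_le walk_cong)

lemma map_walk_incr_Pi_pmf:
  assumes incr_law: "\<And>z. map_pmf (\<lambda>w. inc w z) p = q"
  shows "map_pmf (\<lambda>f k. if k < n then walk_incr inc f k else c) (Pi_pmf {..<n} d (\<lambda>_. p))
       = Pi_pmf {..<n} c (\<lambda>_. q)"
proof (induction n)
  case 0
  then show ?case by simp
next
  case (Suc n)
  define H where "H n f = (\<lambda>k. if k < n then walk_incr inc f k else c)" for n f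
  have H_upd: "H (Suc n) (f(n := y)) = (H n f)(n := inc y (\<Sum>k<n. H n f k))" for f y
  proof
    fix k
    have "walk inc (f(n := y)) n = walk inc f n"
      by (rule walk_cong) simp
    also have "\<dots> = (\<Sum>k<n. H n f k)"
      by (simp add: walk_eq_sum_walk_incr H_def)
    finally have position: "walk inc (f(n := y)) n = (\<Sum>k<n. H n f k)" .
    have "walk_incr inc (f(n := y)) k = walk_incr inc f k" if "k < n"
      using that by (intro walk_incr_cong) auto
    with position show "H (Suc n) (f(n := y)) k = ((H n f)(n := inc y (\<Sum>k<n. H n f k))) k"
      by (auto simp: H_def walk_incr_def)
  qed
  let ?P = "\<lambda>n. Pi_pmf {..<n} d (\<lambda>_. p)"
  let ?Q = "\<lambda>n. Pi_pmf {..<n} c (\<lambda>_. q)"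
  have "map_pmf (H (Suc n)) (?P (Suc n))
      = do {f \<leftarrow> ?P n; y \<leftarrow> p; return_pmf (H (Suc n) (f(n := y)))}"
    unfolding lessThan_Suc
    by (subst Pi_pmf_insert') (auto simp: map_bind_pmf map_return_pmf intro: bind_commute_pmf)
  also have "\<dots> = do {f \<leftarrow> ?P n; map_pmf (\<lambda>a. (H n f)(n := a)) (map_pmf (\<lambda>y. inc y (\<Sum>k<n. H n f k)) p)}"
    by (simp add: H_upd map_pmf_def bind_assoc_pmf bind_return_pmf)
  \<comment> \<open>the next increment has law \<open>q\<close> whatever the current position\<close>
  also have "\<dots> = do {g \<leftarrow> map_pmf (H n) (?P n); map_pmf (\<lambda>a. g(n := a)) q}"
    by (simp add: incr_law bind_map_pmf)
  also have "\<dots> = do {g \<leftarrow> ?Q n; a \<leftarrow> q; return_pmf (g(n := a))}"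
    using Suc.IH by (simp add: H_def map_pmf_def)
  also have "\<dots> = ?Q (Suc n)"
    unfolding lessThan_Suc by (subst Pi_pmf_insert') (auto intro: bind_commute_pmf)
  finally show ?case
    unfolding H_def .
qed

lemma sets_PiM_finite_count_space:
  fixes X :: "('i \<Rightarrow> 'a::countable) set"
  assumes "finite I" "X \<subseteq> space (PiM I (\<lambda>_. count_space UNIV))"
  shows "X \<in> sets (PiM I (\<lambda>_. count_space UNIV))"
proof (rule sets.countable)
  show "countable X"
    using assms countable_PiE[of I "\<lambda>_. UNIV :: 'a set"]
    by (auto simp: space_PiM intro: countable_subset)
  fix g assume "g \<in> X"
  then have "{g} = PiE I (\<lambda>i. {g i})"
    using assms(2) by (intro PiE_singleton[symmetric]) (auto simp: space_PiM PiE_def)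
  also have "\<dots> \<in> sets (PiM I (\<lambda>_. count_space UNIV))"
    using assms(1) by (intro sets_PiM_I_finite) auto
  finally show "{g} \<in> sets (PiM I (\<lambda>_. count_space UNIV))" .
qed

lemma measurable_PiM_finite_count_space:
  fixes f :: "('i \<Rightarrow> 'a::countable) \<Rightarrow> 'b::countable"
  assumes "finite I"
  shows "f \<in> measurable (PiM I (\<lambda>_. count_space UNIV)) (count_space UNIV)"
  unfolding measurable_count_space_eq2_countable
  using assms by (auto intro: sets_PiM_finite_count_space)

lemma measurable_adapted:
  fixes F :: "(nat \<Rightarrow> 'a::countable) \<Rightarrow> nat \<Rightarrow> 'b::countable"
  assumes adapted: "\<And>f g n. (\<And>k. k \<le> n \<Longrightarrow> f k = g k) \<Longrightarrow> F f n = F g n"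
  shows "F \<in> measurable (PiM UNIV (\<lambda>_. count_space UNIV)) (PiM UNIV (\<lambda>_. count_space UNIV))"
proof (rule measurable_PiM_single')
  fix n
  have "(\<lambda>f. F (restrict f {..n}) n) \<in> measurable (PiM UNIV (\<lambda>_. count_space UNIV)) (count_space UNIV)"
    by (rule measurable_compose[OF measurable_restrict_subset measurable_PiM_finite_count_space]) auto
  moreover have "F (restrict f {..n}) n = F f n" for f
    by (rule adapted) simp
  ultimately show "(\<lambda>f. F f n) \<in> measurable (PiM UNIV (\<lambda>_. count_space UNIV)) (count_space UNIV)"
    by simp
qed simp

lemma distr_Pi_pmf_restrict_eq_PiM:
  assumes "finite I"
  shows "distr (measure_pmf (Pi_pmf I d p)) (PiM I (\<lambda>_. count_space UNIV)) (\<lambda>f. restrict f I)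
       = PiM I (\<lambda>i. measure_pmf (p i))"
proof (rule product_sigma_finite.PiM_eqI)
  show "product_sigma_finite (\<lambda>i. measure_pmf (p i))"
    by (intro product_prob_space.axioms(1) product_prob_spaceI measure_pmf.prob_space_axioms)
  show "sets (distr (measure_pmf (Pi_pmf I d p)) (PiM I (\<lambda>_. count_space UNIV)) (\<lambda>f. restrict f I))
      = sets (PiM I (\<lambda>i. measure_pmf (p i)))"
    by (simp add: sets_PiM_cong)
  fix A assume "\<And>i. i \<in> I \<Longrightarrow> A i \<in> sets (measure_pmf (p i))"
  have "emeasure (distr (measure_pmf (Pi_pmf I d p)) (PiM I (\<lambda>_. count_space UNIV)) (\<lambda>f. restrict f I)) (PiE I A)
      = emeasure (measure_pmf (Pi_pmf I d p)) ((\<lambda>f. restrict f I) -` PiE I A)"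
    using assms by (subst emeasure_distr) (auto intro!: sets_PiM_I_finite simp: space_PiM)
  also have "\<dots> = emeasure (measure_pmf (Pi_pmf I d p)) (PiE_dflt I d A)"
    by (intro emeasure_eq_AE AE_pmfI) (auto simp: PiE_dflt_def set_Pi_pmf assms)
  also have "\<dots> = (\<Prod>i\<in>I. emeasure (measure_pmf (p i)) (A i))"
    by (simp add: measure_pmf.emeasure_eq_measure measure_Pi_pmf_PiE_dflt assms prod_ennreal)
  finally show "emeasure (distr (measure_pmf (Pi_pmf I d p)) (PiM I (\<lambda>_. count_space UNIV)) (\<lambda>f. restrict f I)) (PiE I A)
      = (\<Prod>i\<in>I. emeasure (measure_pmf (p i)) (A i))" .
qed fact

lemma measure_eqI_PiM_restrict_lessThan:
  fixes N N' :: "(nat \<Rightarrow> 'a) measure"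
  assumes sets_N: "sets N = sets (PiM UNIV M)" and sets_N': "sets N' = sets (PiM UNIV M)"
    and "finite_measure N"
    and marginals: "\<And>n. distr N (PiM {..<n} M) (\<lambda>f. restrict f {..<n})
                       = distr N' (PiM {..<n} M) (\<lambda>f. restrict f {..<n})"
  shows "N = N'"
proof (rule measure_eqI_PiM_infinite[OF sets_N sets_N' _ \<open>finite_measure N\<close>])
  fix J :: "nat set" and A
  assume J: "finite J" and A: "\<And>i. i \<in> J \<Longrightarrow> A i \<in> sets (M i)"
  obtain n where n: "J \<subseteq> {..<n}"
    using J finite_nat_bounded by blast
  have cyl: "prod_emb {..<n} M J (PiE J A) \<in> sets (PiM {..<n} M)"
    using J A n by (intro sets_PiM_I) auto
  have "emeasure N (prod_emb UNIV M J (PiE J A))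
      = emeasure (distr N (PiM {..<n} M) (\<lambda>f. restrict f {..<n})) (prod_emb {..<n} M J (PiE J A))"
    using n by (simp add: emeasure_distr_restrict[OF _ sets_N cyl])
  also have "\<dots> = emeasure N' (prod_emb UNIV M J (PiE J A))"
    using n by (simp add: marginals emeasure_distr_restrict[OF _ sets_N' cyl])
  finally show "emeasure N (prod_emb UNIV M J (PiE J A)) = emeasure N' (prod_emb UNIV M J (PiE J A))" .
qed

lemma distr_PiM_pmf_restrict_eq_Pi_pmf:
  assumes "finite J"
  shows "distr (PiM UNIV (\<lambda>_. measure_pmf p)) (PiM J (\<lambda>_. count_space UNIV)) (\<lambda>f. restrict f J)
       = distr (measure_pmf (Pi_pmf J d (\<lambda>_. p))) (PiM J (\<lambda>_. count_space UNIV)) (\<lambda>f. restrict f J)"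
proof -
  interpret product_prob_space "\<lambda>_. measure_pmf p" UNIV
    by (intro product_prob_spaceI measure_pmf.prob_space_axioms)
  have "distr (PiM UNIV (\<lambda>_. measure_pmf p)) (PiM J (\<lambda>_. count_space UNIV)) (\<lambda>f. restrict f J)
      = distr (PiM UNIV (\<lambda>_. measure_pmf p)) (PiM J (\<lambda>_. measure_pmf p)) (\<lambda>f. restrict f J)"
    by (intro distr_cong sets_PiM_cong) simp_all
  also have "\<dots> = PiM J (\<lambda>_. measure_pmf p)"
    using assms by (simp add: distr_PiM_restrict_finite)
  finally show ?thesis
    using assms by (simp add: distr_Pi_pmf_restrict_eq_PiM)
qed

lemma distr_PiM_adapted_restrict_eq_Pi_pmf:
  fixes F :: "(nat \<Rightarrow> 'a::countable) \<Rightarrow> nat \<Rightarrow> 'b::countable"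
  assumes adapted: "\<And>f g n. (\<And>k. k \<le> n \<Longrightarrow> f k = g k) \<Longrightarrow> F f n = F g n"
  shows "distr (distr (PiM UNIV (\<lambda>_. measure_pmf p)) (PiM UNIV (\<lambda>_. count_space UNIV)) F)
           (PiM {..<n} (\<lambda>_. count_space UNIV)) (\<lambda>f. restrict f {..<n})
       = distr (measure_pmf (map_pmf (\<lambda>f k. if k < n then F f k else c) (Pi_pmf {..<n} d (\<lambda>_. p))))
           (PiM {..<n} (\<lambda>_. count_space UNIV)) (\<lambda>f. restrict f {..<n})"
proof -
  let ?P = "PiM UNIV (\<lambda>_. measure_pmf p)"
  let ?Cn = "PiM {..<n} (\<lambda>_. count_space UNIV) :: (nat \<Rightarrow> 'b) measure"
  let ?r = "\<lambda>f. restrict f {..<n}"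
  let ?F = "\<lambda>f k. if k < n then F f k else c"
  define G where "G f = restrict (F f) {..<n}" for f :: "nat \<Rightarrow> 'a"
  have sets_P: "sets ?P = sets (PiM UNIV (\<lambda>_. count_space UNIV))"
    by (intro sets_PiM_cong) simp_all
  have F_meas: "F \<in> measurable ?P (PiM UNIV (\<lambda>_. count_space UNIV))"
    unfolding measurable_cong_sets[OF sets_P refl] using adapted by (rule measurable_adapted)
  have r_meas: "?r \<in> measurable ?P (PiM {..<n} (\<lambda>_. count_space UNIV))"
    unfolding measurable_cong_sets[OF sets_P refl] by (rule measurable_restrict_subset) simp
  have G_meas: "G \<in> measurable (PiM {..<n} (\<lambda>_. count_space UNIV)) ?Cn"
    unfolding G_def by (intro measurable_restrict measurable_PiM_finite_count_space) simp
  have G_restrict: "G (restrict f {..<n}) = G f" for f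
    unfolding G_def by (intro restrict_ext adapted) auto
  have F_G: "?r \<circ> F = G \<circ> ?r"
    unfolding comp_def G_restrict by (simp add: G_def)
  have G_F: "G \<circ> ?r = ?r \<circ> ?F"
    unfolding comp_def G_restrict by (auto simp: G_def fun_eq_iff)
  have "distr (distr ?P (PiM UNIV (\<lambda>_. count_space UNIV)) F) ?Cn ?r = distr ?P ?Cn (G \<circ> ?r)"
    using F_meas F_G by (subst distr_distr) simp_all
  also have "\<dots> = distr (distr ?P (PiM {..<n} (\<lambda>_. count_space UNIV)) ?r) ?Cn G"
    using G_meas r_meas by (simp add: distr_distr)
  also have "\<dots> = distr (distr (measure_pmf (Pi_pmf {..<n} d (\<lambda>_. p))) (PiM {..<n} (\<lambda>_. count_space UNIV)) ?r) ?Cn G"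
    by (subst distr_PiM_pmf_restrict_eq_Pi_pmf[where d = d]) simp_all
  also have "\<dots> = distr (measure_pmf (Pi_pmf {..<n} d (\<lambda>_. p))) ?Cn (?r \<circ> ?F)"
    using G_meas G_F by (subst distr_distr) (auto simp: space_PiM)
  also have "\<dots> = distr (measure_pmf (map_pmf ?F (Pi_pmf {..<n} d (\<lambda>_. p)))) ?Cn ?r"
    by (simp add: map_pmf_rep_eq distr_distr space_PiM)
  finally show ?thesis .
qed

lemma distr_PiM_adapted_eq_PiM:
  fixes F :: "(nat \<Rightarrow> 'a::countable) \<Rightarrow> nat \<Rightarrow> 'b::countable"
  assumes adapted: "\<And>f g n. (\<And>k. k \<le> n \<Longrightarrow> f k = g k) \<Longrightarrow> F f n = F g n"
    and marginals: "\<And>n. map_pmf (\<lambda>f k. if k < n then F f k else c) (Pi_pmf {..<n} d (\<lambda>_. p))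
                       = Pi_pmf {..<n} c (\<lambda>_. q)"
  shows "distr (PiM UNIV (\<lambda>_. measure_pmf p)) (PiM UNIV (\<lambda>_. count_space UNIV)) F
       = PiM UNIV (\<lambda>_. measure_pmf q)"
proof (rule measure_eqI_PiM_restrict_lessThan[where M = "\<lambda>_. count_space UNIV"])
  have sets_P: "sets (PiM UNIV (\<lambda>_. measure_pmf p)) = sets (PiM UNIV (\<lambda>_. count_space UNIV))"
    by (intro sets_PiM_cong) simp_all
  have "F \<in> measurable (PiM UNIV (\<lambda>_. measure_pmf p)) (PiM UNIV (\<lambda>_. count_space UNIV))"
    unfolding measurable_cong_sets[OF sets_P refl] using adapted by (rule measurable_adapted)
  then show "finite_measure (distr (PiM UNIV (\<lambda>_. measure_pmf p)) (PiM UNIV (\<lambda>_. count_space UNIV)) F)"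
    by (intro prob_space.finite_measure prob_space.prob_space_distr prob_space_PiM
        measure_pmf.prob_space_axioms)
  show "sets (PiM UNIV (\<lambda>_. measure_pmf q)) = sets (PiM UNIV (\<lambda>_. count_space UNIV))"
    by (intro sets_PiM_cong) simp_all
  fix n
  have "distr (distr (PiM UNIV (\<lambda>_. measure_pmf p)) (PiM UNIV (\<lambda>_. count_space UNIV)) F)
          (PiM {..<n} (\<lambda>_. count_space UNIV)) (\<lambda>f. restrict f {..<n})
      = distr (measure_pmf (map_pmf (\<lambda>f k. if k < n then F f k else c) (Pi_pmf {..<n} d (\<lambda>_. p))))
          (PiM {..<n} (\<lambda>_. count_space UNIV)) (\<lambda>f. restrict f {..<n})"
    using adapted by (rule distr_PiM_adapted_restrict_eq_Pi_pmf)
  also have "\<dots> = distr (PiM UNIV (\<lambda>_. measure_pmf q)) (PiM {..<n} (\<lambda>_. count_space UNIV))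
                     (\<lambda>f. restrict f {..<n})"
    unfolding marginals by (subst distr_PiM_pmf_restrict_eq_Pi_pmf[where d = c]) simp_all
  finally show "distr (distr (PiM UNIV (\<lambda>_. measure_pmf p)) (PiM UNIV (\<lambda>_. count_space UNIV)) F)
          (PiM {..<n} (\<lambda>_. count_space UNIV)) (\<lambda>f. restrict f {..<n})
      = distr (PiM UNIV (\<lambda>_. measure_pmf q)) (PiM {..<n} (\<lambda>_. count_space UNIV))
          (\<lambda>f. restrict f {..<n})" .
qed simp

lemma distr_walk_incr_eq_PiM:
  fixes inc :: "'w::countable \<Rightarrow> 'b::{countable, comm_monoid_add} \<Rightarrow> 'b"
  assumes "\<And>z. map_pmf (\<lambda>w. inc w z) p = q"
  shows "distr (PiM UNIV (\<lambda>_. measure_pmf p)) (PiM UNIV (\<lambda>_. count_space UNIV)) (walk_incr inc)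
       = PiM UNIV (\<lambda>_. measure_pmf q)"
  by (rule distr_PiM_adapted_eq_PiM[OF walk_incr_cong map_walk_incr_Pi_pmf[OF assms]]) auto

lemma (in prob_space) distr_iid_reindex_eq_PiM:
  fixes X :: "'i \<Rightarrow> 'a \<Rightarrow> 'b" and g :: "'j \<Rightarrow> 'i"
  assumes indep: "indep_vars (\<lambda>_. count_space UNIV) X UNIV"
    and law: "\<And>i. distr M (count_space UNIV) (X i) = measure_pmf p"
    and "inj g"
  shows "distr M (PiM UNIV (\<lambda>_. count_space UNIV)) (\<lambda>\<omega> j. X (g j) \<omega>) = PiM UNIV (\<lambda>_. measure_pmf p)"
proof -
  have rv: "random_variable (count_space UNIV) (X i)" for i
    using indep unfolding indep_vars_def by simp
  have X_meas: "(\<lambda>\<omega> i. X i \<omega>) \<in> measurable M (PiM UNIV (\<lambda>_. count_space UNIV))"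
    by (rule measurable_PiM_single') (simp_all add: rv)
  have "distr M (PiM UNIV (\<lambda>_. count_space UNIV)) (\<lambda>\<omega> i. X i \<omega>) = PiM UNIV (\<lambda>i. distr M (count_space UNIV) (X i))"
    using indep indep_vars_iff_distr_eq_PiM[of UNIV X "\<lambda>_. count_space UNIV"] rv by (simp add: restrict_UNIV)
  also have "\<dots> = PiM UNIV (\<lambda>_. measure_pmf p)"
    by (simp add: law)
  finally have iid: "distr M (PiM UNIV (\<lambda>_. measure_pmf p)) (\<lambda>\<omega> i. X i \<omega>) = PiM UNIV (\<lambda>_. measure_pmf p)"
    by (subst distr_cong[OF refl sets_PiM_cong refl]) simp_all
  have "distr M (PiM UNIV (\<lambda>_. count_space UNIV)) (\<lambda>\<omega> j. X (g j) \<omega>)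
      = distr (distr M (PiM UNIV (\<lambda>_. measure_pmf p)) (\<lambda>\<omega> i. X i \<omega>)) (PiM UNIV (\<lambda>_. measure_pmf p))
          (\<lambda>\<omega> j. \<omega> (g j))"
    using X_meas
    by (subst distr_distr) (auto simp: comp_def intro!: distr_cong sets_PiM_cong measurable_PiM_single'
        measurable_component_singleton)
  also have "\<dots> = PiM UNIV (\<lambda>_. measure_pmf p)"
    using distr_PiM_reindex[of UNIV "\<lambda>_. measure_pmf p" g UNIV] \<open>inj g\<close>
    by (simp add: iid restrict_UNIV measure_pmf.prob_space_axioms)
  finally show ?thesis .
qed

lemma nu_eq_mixture:
  "nu = do {b \<leftarrow> bernoulli_pmf (1/2);
            if b then return_pmf (1, -1)
            else map_pmf (\<lambda>(i, j). (- int i, int j))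
                   (pair_pmf (geometric_pmf (1/2)) (geometric_pmf (1/2)))}"
  (is "nu = ?R")
proof -
  let ?g = "\<lambda>(i::nat, j::nat). (- int i, int j)"
  have preimage: "?g -` {w} = (if fst w \<le> 0 \<and> snd w \<ge> 0 then {(nat (- fst w), nat (snd w))} else {})"
    for w :: "int \<times> int"
    by (cases w) auto
  have "pmf ?R w = nu_mass w" for w
    by (auto simp: pmf_bind pmf_map preimage measure_pmf_single pmf_pair nu_mass_def power_add
        numeral_eq_Suc)
  then have "pmf ?R = nu_mass" ..
  then show ?thesis
    unfolding nu_def by (metis type_definition.Rep_inverse[OF td_pmf_embed_pmf])
qed

lemma map_pmf_nu:
  "map_pmf h nu = do {b \<leftarrow> bernoulli_pmf (1/2);
      if b then return_pmf (h (1, -1))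
      else map_pmf (\<lambda>(i, j). h (- int i, int j))
             (pair_pmf (geometric_pmf (1/2)) (geometric_pmf (1/2)))}"
  unfolding nu_eq_mixture map_bind_pmf
  by (intro bind_pmf_cong) (auto simp: map_pmf_comp intro!: map_pmf_cong)

lemma map_snd_nu_eq_map_neg_fst_nu: "map_pmf snd nu = map_pmf (\<lambda>w. - fst w) nu"
proof -
  let ?G = "geometric_pmf (1/2)"
  have swap: "map_pmf (\<lambda>(i, j). int j) (pair_pmf ?G ?G) = map_pmf (\<lambda>(i, j). int i) (pair_pmf ?G ?G)"
    by (subst pair_commute_pmf) (auto simp: map_pmf_comp intro!: map_pmf_cong)
  have "map_pmf snd nu = do {b \<leftarrow> bernoulli_pmf (1/2);
      if b then return_pmf (-1) else map_pmf (\<lambda>(i, j). int j) (pair_pmf ?G ?G)}"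
    by (simp add: map_pmf_nu cong: if_cong)
  also have "\<dots> = map_pmf (\<lambda>w. - fst w) nu"
    by (simp add: map_pmf_nu swap cong: if_cong)
  finally show ?thesis .
qed

lemma map_cw_inc_nu: "map_pmf (\<lambda>w. cw_inc w z) nu = map_pmf snd nu"
proof -
  let ?G = "geometric_pmf (1/2)"
  have "map_pmf (\<lambda>(i, j). cw_inc (- int i, int j) z) (pair_pmf ?G ?G)
      = map_pmf (\<lambda>(i, j). int j) (pair_pmf ?G ?G)"
  proof (cases "z \<ge> 0")
    case True
    then show ?thesis by (simp add: cw_inc_def)
  next
    case False
    define m where "m = nat (- z)"
    have "map_pmf (\<lambda>(i, j). cw_inc (- int i, int j) z) (pair_pmf ?G ?G)
        = map_pmf int (map_pmf (\<lambda>(i, j). if i < m then i else m + j) (pair_pmf ?G ?G))"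
      using False by (auto simp: map_pmf_comp cw_inc_def m_def intro!: map_pmf_cong)
    also have "\<dots> = map_pmf int ?G"
      by (simp add: geometric_pmf_memoryless)
    also have "\<dots> = map_pmf int (map_pmf snd (pair_pmf ?G ?G))"
      by (simp add: map_snd_pair_pmf)
    also have "\<dots> = map_pmf (\<lambda>(i, j). int j) (pair_pmf ?G ?G)"
      by (auto simp: map_pmf_comp intro!: map_pmf_cong)
    finally show ?thesis .
  qed
  then show ?thesis
    by (simp add: map_pmf_nu cw_inc_def cong: if_cong)
qed

lemma cwp_eq_walk: "cwp xi t n = walk cw_inc (\<lambda>k. xi (t + int k)) n"
  by (induction n) auto

theorem proposition3p3:
  fixes M :: "'a measure" and xi :: "int \<Rightarrow> 'a \<Rightarrow> int \<times> int" and t :: int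
  assumes "prob_space M"
    and "prob_space.indep_vars M (\<lambda>_. count_space UNIV) xi UNIV"
    and "\<And>l. distr M (count_space UNIV) (xi l) = measure_pmf nu"
  shows "distr M (PiM UNIV (\<lambda>_::nat. count_space (UNIV::int set)))
            (\<lambda>\<omega> n. cwp (\<lambda>l. xi l \<omega>) t n)
       = distr (PiM UNIV (\<lambda>_::nat. measure_pmf (map_pmf snd nu)))
            (PiM UNIV (\<lambda>_::nat. count_space (UNIV::int set)))
            (\<lambda>\<eta> n. \<Sum>k<n. \<eta> k)
     \<and> map_pmf snd nu = map_pmf (\<lambda>w. - fst w) nu"
proof
  interpret prob_space M by fact
  let ?C = "PiM UNIV (\<lambda>_::nat. count_space (UNIV::int set))"
  let ?W = "PiM UNIV (\<lambda>_::nat. count_space (UNIV::(int \<times> int) set))"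
  let ?steps = "\<lambda>\<omega> n. xi (t + int n) \<omega>"
  let ?sums = "\<lambda>\<eta> n. \<Sum>k<n. \<eta> k :: int"
  have steps_meas: "?steps \<in> measurable M ?W"
    using assms(2) by (intro measurable_PiM_single') (auto simp: indep_vars_def)
  have incr_meas: "walk_incr cw_inc \<in> measurable ?W ?C"
    by (rule measurable_adapted[OF walk_incr_cong]) auto
  have sums_meas: "?sums \<in> measurable ?C ?C"
    by (rule measurable_adapted) simp
  have "(\<lambda>\<omega> n. cwp (\<lambda>l. xi l \<omega>) t n) = ?sums \<circ> (walk_incr cw_inc \<circ> ?steps)"
    by (simp add: fun_eq_iff cwp_eq_walk walk_eq_sum_walk_incr)
  then have "distr M ?C (\<lambda>\<omega> n. cwp (\<lambda>l. xi l \<omega>) t n)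
      = distr (distr (distr M ?W ?steps) ?C (walk_incr cw_inc)) ?C ?sums"
    using steps_meas incr_meas sums_meas by (simp add: distr_distr measurable_comp)
  also have "distr M ?W ?steps = PiM UNIV (\<lambda>_. measure_pmf nu)"
    using assms(2,3) by (rule distr_iid_reindex_eq_PiM) (simp add: inj_def)
  also have "distr \<dots> ?C (walk_incr cw_inc) = PiM UNIV (\<lambda>_. measure_pmf (map_pmf snd nu))"
    by (rule distr_walk_incr_eq_PiM) (rule map_cw_inc_nu)
  finally show "distr M ?C (\<lambda>\<omega> n. cwp (\<lambda>l. xi l \<omega>) t n)
      = distr (PiM UNIV (\<lambda>_. measure_pmf (map_pmf snd nu))) ?C ?sums" .
  show "map_pmf snd nu = map_pmf (\<lambda>w. - fst w) nu"
    by (rule map_snd_nu_eq_map_neg_fst_nu)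
qed

end
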